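(* Let $\mathfrak g$ be a Lie algebra and $r_1,r_2\in\wedge^2\mathfrak g$ skew-symmetric $r$-matrices. Let $\phi:\mathfrak g\to\mathfrak g$ be a Lie algebra homomorphism and $\varphi:\mathfrak g\to\mathfrak g$ a linear map. Then $(\phi,\varphi)$ is a weak homomorphism (resp. weak isomorphism) from $r_2$ to $r_1$ if and only if $(\phi,\varphi^* )$ is a homomorphism (resp. isomorphism) from $r_2^\sharp$ to $r_1^\sharp$ as $\mathcal O$-operators on $\mathfrak g$ with respect to the coadjoint representation.
   Context: A skew-symmetric $r$-matrix is $r\in\wedge^2\mathfrak g$ with $[r,r]=0$ (Gerstenhaber bracket); $r^\sharp:\mathfrak g^*\to\mathfrak g$, $\langle r^\sharp\xi,\eta\rangle=\langle r,\xi\otimes\eta\rangle$, is then an $\mathcal O$-operator with respect to the coadjoint representation $\mathrm{ad}^*$, $\langle\mathrm{ad}^*_x\xi,y\rangle=-\langle\xi,[x,y]\rangle$. A weak homomorphism from $r_2$ to $r_1$ is a pair of a Lie algebra homomorphism $\phi:\mathfrak g\to\mathfrak g$ and a linear map $\varphi:\mathfrak g\to\mathfrak g$ with $(\varphi\otimes\mathrm{Id}_{\mathfrak g})(r_1)=(\mathrm{Id}_{\mathfrak g}\otimes\phi)(r_2)$ and $\varphi[\phi(x),y]=[x,\varphi(y)]$ for all $x,y\in\mathfrak g$; a weak isomorphism if moreover $\phi,\varphi$ are linear isomorphisms. For $\mathcal O$-operators $T,T':V\to\mathfrak g$ with respect to a representation $(V;\rho)$, a homomorphism from $T'$ to $T$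 is a pair of a Lie algebra homomorphism $\phi_{\mathfrak g}:\mathfrak g\to\mathfrak g$ and a linear $\phi_V:V\to V$ with $T\circ\phi_V=\phi_{\mathfrak g}\circ T'$ and $\phi_V\rho(x)(u)=\rho(\phi_{\mathfrak g}(x))(\phi_V(u))$; an isomorphism if both are invertible. Here $V=\mathfrak g^*$, $\rho=\mathrm{ad}^*$, and $\varphi^*:\mathfrak g^*\to\mathfrak g^*$ is the dual map. *)

theory Defs
  imports "HOL-Analysis.Analysis"
begin

text \<open>The finite-dimensional Lie algebra g over a field 'k is modelled as the
coordinate space 'k^'n (standard basis axis i 1) with a bracket br. The dual space g* is
modelled as 'k^'n as well, via the nondegenerate pairing pair xi x = sum_i xi_i x_i.
Elements of g (x) g are matrices r :: 'k^'n^'n, r = sum_{i,j} r_ij e_i (x) e_j.\<close>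

abbreviation klinear :: "('k::field^'n \<Rightarrow> 'k^'m) \<Rightarrow> bool" where
  "klinear f \<equiv> Vector_Spaces.linear ((*s)) ((*s)) f"

definition pair :: "'k::field^'n \<Rightarrow> 'k^'n \<Rightarrow> 'k" where
  "pair xi x = (\<Sum>i\<in>UNIV. xi $ i * x $ i)"

definition lie_algebra :: "('k::field^'n \<Rightarrow> 'k^'n \<Rightarrow> 'k^'n) \<Rightarrow> bool" where
  "lie_algebra br \<longleftrightarrow>
     (\<forall>x. klinear (br x)) \<and> (\<forall>y. klinear (\<lambda>x. br x y)) \<and>
     (\<forall>x. br x x = 0) \<and>
     (\<forall>x y z. br x (br y z) + br y (br z x) + br z (br x y) = 0)"

definition lie_hom :: "('k::field^'n \<Rightarrow> 'k^'n \<Rightarrow> 'k^'n) \<Rightarrow> ('k^'n \<Rightarrow> 'k^'n) \<Rightarrow> bool" where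
  "lie_hom br f \<longleftrightarrow> klinear f \<and> (\<forall>x y. f (br x y) = br (f x) (f y))"

definition tev :: "'k::field^'n^'n \<Rightarrow> 'k^'n \<Rightarrow> 'k^'n \<Rightarrow> 'k" where
  "tev r xi eta = (\<Sum>i\<in>UNIV. \<Sum>j\<in>UNIV. r $ i $ j * xi $ i * eta $ j)"

definition skew2 :: "'k::field^'n^'n \<Rightarrow> bool" where
  "skew2 r \<longleftrightarrow> (\<forall>i j. r $ i $ j = - r $ j $ i) \<and> (\<forall>i. r $ i $ i = 0)"

text \<open>[r,r] evaluated on xi (x) eta (x) zeta, in the classical Yang-Baxter form
[r12,r13] + [r12,r23] + [r13,r23] (for skew-symmetric r this is, up to a nonzero
normalising constant, the Gerstenhaber/Schouten bracket [r,r]).\<close>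
definition rr_eval :: "('k::field^'n \<Rightarrow> 'k^'n \<Rightarrow> 'k^'n) \<Rightarrow> 'k^'n^'n \<Rightarrow> 'k^'n \<Rightarrow> 'k^'n \<Rightarrow> 'k^'n \<Rightarrow> 'k" where
  "rr_eval br r xi eta zeta =
     (\<Sum>i\<in>UNIV. \<Sum>j\<in>UNIV. \<Sum>k\<in>UNIV. \<Sum>l\<in>UNIV. r $ i $ j * r $ k $ l *
        ( pair xi (br (axis i 1) (axis k 1)) * eta $ j * zeta $ l
        + xi $ i * pair eta (br (axis j 1) (axis k 1)) * zeta $ l
        + xi $ i * eta $ k * pair zeta (br (axis j 1) (axis l 1))))"

definition skew_r_matrix :: "('k::field^'n \<Rightarrow> 'k^'n \<Rightarrow> 'k^'n) \<Rightarrow> 'k^'n^'n \<Rightarrow> bool" where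
  "skew_r_matrix br r \<longleftrightarrow> skew2 r \<and> (\<forall>xi eta zeta. rr_eval br r xi eta zeta = 0)"

text \<open>r^sharp : g* -> g, characterised by pair eta (sharp r xi) = tev r xi eta.\<close>
definition sharp :: "'k::field^'n^'n \<Rightarrow> 'k^'n \<Rightarrow> 'k^'n" where
  "sharp r xi = (\<chi> j. \<Sum>i\<in>UNIV. r $ i $ j * xi $ i)"

definition coad :: "('k::field^'n \<Rightarrow> 'k^'n \<Rightarrow> 'k^'n) \<Rightarrow> 'k^'n \<Rightarrow> 'k^'n \<Rightarrow> 'k^'n" where
  "coad br x xi = (\<chi> i. - pair xi (br x (axis i 1)))"

definition dual_map :: "('k::field^'n \<Rightarrow> 'k^'n) \<Rightarrow> 'k^'n \<Rightarrow> 'k^'n" where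
  "dual_map f xi = (\<chi> i. pair xi (f (axis i 1)))"

definition tmap :: "('k::field^'n \<Rightarrow> 'k^'n) \<Rightarrow> ('k^'n \<Rightarrow> 'k^'n) \<Rightarrow> 'k^'n^'n \<Rightarrow> 'k^'n^'n" where
  "tmap A B r = (\<chi> i j. \<Sum>k\<in>UNIV. \<Sum>l\<in>UNIV. r $ k $ l * A (axis k 1) $ i * B (axis l 1) $ j)"

definition weak_hom where
  "weak_hom br r2 r1 phi vphi \<longleftrightarrow>
     lie_hom br phi \<and> klinear vphi \<and>
     tmap vphi id r1 = tmap id phi r2 \<and>
     (\<forall>x y. vphi (br (phi x) y) = br x (vphi y))"

definition weak_iso where
  "weak_iso br r2 r1 phi vphi \<longleftrightarrow> weak_hom br r2 r1 phi vphi \<and> bij phi \<and> bij vphi"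

definition O_hom where
  "O_hom br rho T' T phig phiV \<longleftrightarrow>
     lie_hom br phig \<and> klinear phiV \<and>
     T \<circ> phiV = phig \<circ> T' \<and>
     (\<forall>x u. phiV (rho x u) = rho (phig x) (phiV u))"

definition O_iso where
  "O_iso br rho T' T phig phiV \<longleftrightarrow> O_hom br rho T' T phig phiV \<and> bij phig \<and> bij phiV"

end

theory Submission
  imports Defs
begin

(* In coordinates, with g* identified with g through the pairing, r^# is the row-vector map
   xi |-> xi r and varphi^* is xi |-> xi [varphi], while (varphi (x) id) r = [varphi] r and
   (id (x) phi) r = r [phi]^T. Hence r1^# o varphi^* and phi o r2^# are the sharps of the two
   sides of the tensor condition, and since sharp is injective the tensor condition is exactly
   the intertwining condition of O-operators. As ad*_x = -(ad_x)^*, the equivariance of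
   varphi^* is the dual of varphi o ad_(phi x) = ad_x o varphi; dualisation is injective on
   linear maps and preserves bijectivity. *)

lemma sum_axis_nth_mult: "(\<Sum>k\<in>UNIV. (axis k (1::'k::field) :: 'k^'n) $ i * f k) = f i"
  by (simp add: axis_def if_distrib[of "\<lambda>t. t * _"] cong: if_cong)

lemma dual_map_eq_matrix: "dual_map f xi = xi v* matrix f"
  by (simp add: dual_map_def pair_def vec_eq_iff vector_matrix_mult_def matrix_def mult.commute)

lemma sharp_eq_matrix: "sharp r xi = xi v* r"
  by (simp add: sharp_def vec_eq_iff vector_matrix_mult_def mult.commute)

lemma tmap_id_right: "tmap A id (r :: 'k::field^'n^'n) = matrix A ** r"
  by (simp add: tmap_def vec_eq_iff matrix_matrix_mult_def matrix_def
      mult.commute[of _ "axis _ 1 $ _"] sum_axis_nth_mult, simp add: mult.commute)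

lemma tmap_id_left: "tmap id B (r :: 'k::field^'n^'n) = r ** transpose (matrix B)"
  unfolding tmap_def vec_eq_iff
  by (subst sum.swap) (simp add: matrix_matrix_mult_def matrix_def transpose_def
      mult.assoc mult.left_commute[of _ "axis _ 1 $ _"] sum_axis_nth_mult)

lemma bij_vector_matrix_mult_iff: "bij (\<lambda>x. x v* A) \<longleftrightarrow> bij ((*v) (A :: 'k::field^'n^'n))"
proof -
  have "(\<lambda>x. x v* A) = (*v) (transpose A)"
    by (simp add: fun_eq_iff)
  then show ?thesis
    by (simp add: invertible_det_nz flip: invertible_eq_bij)
qed

lemma linear_dual_map: "klinear (dual_map f)"
  by (simp add: dual_map_eq_matrix[abs_def] flip: transpose_matrix_vector)

lemma dual_map_comp:
  assumes "klinear f" "klinear g"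
  shows "dual_map g \<circ> dual_map f = dual_map (f \<circ> g)"
  by (simp add: dual_map_eq_matrix fun_eq_iff vector_matrix_mul_assoc matrix_compose_gen[OF assms(2,1)])

lemma dual_map_dual_map:
  assumes "klinear f"
  shows "dual_map (dual_map f) = f"
  by (simp add: dual_map_eq_matrix[abs_def] fun_eq_iff matrix_works[OF assms] flip: transpose_matrix_vector)

lemma dual_map_inject:
  assumes "klinear f" "klinear g"
  shows "dual_map f = dual_map g \<longleftrightarrow> f = g"
  by (metis assms dual_map_dual_map)

lemma bij_dual_map_iff:
  assumes "klinear f"
  shows "bij (dual_map f) \<longleftrightarrow> bij f"
  by (simp add: dual_map_eq_matrix[abs_def] bij_vector_matrix_mult_iff matrix_works[OF assms, abs_def])

lemma coad_eq_dual_map: "coad br x xi = - dual_map (br x) xi"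
  by (simp add: coad_def dual_map_def vec_eq_iff)

lemma sharp_comp_dual_map: "sharp r \<circ> dual_map A = sharp (tmap A id r)"
  by (simp add: fun_eq_iff sharp_eq_matrix dual_map_eq_matrix tmap_id_right vector_matrix_mul_assoc)

lemma comp_sharp:
  assumes "klinear B"
  shows "B \<circ> sharp r = sharp (tmap id B r)"
proof
  fix xi
  have "xi v* (r ** transpose (matrix B)) = matrix B *v (xi v* r)"
    by (simp flip: vector_matrix_mul_assoc)
  then show "(B \<circ> sharp r) xi = sharp (tmap id B r) xi"
    by (simp add: sharp_eq_matrix tmap_id_left matrix_works[OF assms])
qed

lemma sharp_inject: "sharp r = sharp s \<longleftrightarrow> r = s"
proof
  assume "sharp r = sharp s"
  then have "\<forall>x. transpose r *v x = transpose s *v x"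
    by (simp add: sharp_eq_matrix fun_eq_iff)
  then show "r = s"
    using matrix_eq[of "transpose r" "transpose s"] by simp
qed simp

lemma tmap_eq_tmap_iff_sharp_comp:
  assumes "klinear phi"
  shows "tmap vphi id r1 = tmap id phi r2 \<longleftrightarrow> sharp r1 \<circ> dual_map vphi = phi \<circ> sharp r2"
  by (simp add: sharp_comp_dual_map comp_sharp[OF assms] sharp_inject)

lemma dual_map_coad_iff:
  assumes "klinear (br x)" "klinear (br y)" "klinear vphi"
  shows "(\<forall>u. dual_map vphi (coad br x u) = coad br y (dual_map vphi u)) \<longleftrightarrow>
         vphi \<circ> br y = br x \<circ> vphi"
proof -
  have "dual_map vphi (coad br x u) = - dual_map (br x \<circ> vphi) u" for u
    using dual_map_comp[OF assms(1,3)]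
    by (simp add: coad_eq_dual_map vec.linear_neg[OF linear_dual_map] fun_eq_iff)
  moreover have "coad br y (dual_map vphi u) = - dual_map (vphi \<circ> br y) u" for u
    using dual_map_comp[OF assms(3,2)] by (simp add: coad_eq_dual_map fun_eq_iff)
  ultimately show ?thesis
    using dual_map_inject[OF Vector_Spaces.linear_compose[OF assms(3,1)]
                             Vector_Spaces.linear_compose[OF assms(2,3)]]
    by (auto simp add: fun_eq_iff)
qed

theorem proposition7p11:
  fixes br :: "'k::field^'n \<Rightarrow> 'k^'n \<Rightarrow> 'k^'n"
    and r1 r2 :: "'k^'n^'n"
    and phi vphi :: "'k^'n \<Rightarrow> 'k^'n"
  assumes "lie_algebra br"
    and "skew_r_matrix br r1" and "skew_r_matrix br r2"
    and "lie_hom br phi"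
    and "klinear vphi"
  shows "(weak_hom br r2 r1 phi vphi \<longleftrightarrow>
            O_hom br (coad br) (sharp r2) (sharp r1) phi (dual_map vphi))
       \<and> (weak_iso br r2 r1 phi vphi \<longleftrightarrow>
            O_iso br (coad br) (sharp r2) (sharp r1) phi (dual_map vphi))"
proof -
  have linear_phi: "klinear phi"
    using assms(4) by (simp add: lie_hom_def)
  have linear_br: "klinear (br x)" for x
    using assms(1) by (simp add: lie_algebra_def)
  have equivariance_iff:
    "(\<forall>x y. vphi (br (phi x) y) = br x (vphi y)) \<longleftrightarrow>
     (\<forall>x u. dual_map vphi (coad br x u) = coad br (phi x) (dual_map vphi u))"
    using dual_map_coad_iff[OF linear_br linear_br assms(5)] by (simp add: fun_eq_iff)
  have hom_iff: "weak_hom br r2 r1 phi vphi \<longleftrightarrow>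
                 O_hom br (coad br) (sharp r2) (sharp r1) phi (dual_map vphi)"
    unfolding weak_hom_def O_hom_def
    using tmap_eq_tmap_iff_sharp_comp[OF linear_phi] equivariance_iff linear_dual_map assms(4,5)
    by blast
  moreover have "weak_iso br r2 r1 phi vphi \<longleftrightarrow>
                 O_iso br (coad br) (sharp r2) (sharp r1) phi (dual_map vphi)"
    unfolding weak_iso_def O_iso_def using hom_iff bij_dual_map_iff[OF assms(5)] by blast
  ultimately show ?thesis ..
qed

end
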